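(* The set of points $x\in[0,1]$ whose forward orbit $\{R^n(x):n\ge0\}$ is dense in $[0,1]$ is uncountable and dense in $[0,1]$.
   Context: Define $\rho$ on binary words: for $b=b_1b_2\dots$, $\rho(b)$ is obtained by deleting every digit $b_n=0$ and replacing every $b_n=1$ by $0$ if $n$ is odd and by $1$ if $n$ is even. For $x\in(0,1]$ let $\beta(x)$ be the unique binary expansion of $x$ with infinitely many $1$'s. Define $R:[0,1]\to[0,1]$ by $R(0)=2/3$ and, for $x\in(0,1]$, $R(x)=\sum_{n\ge1}c_n2^{-n}$ where $c=\rho(\beta(x))$. *)

theory Defs
  imports "HOL-Analysis.Analysis" "HOL-Library.Infinite_Set" "HOL-Library.Countable_Set"
begin

text \<open>Infinite binary words are modelled as w :: nat => bool, 0-indexed: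
  w k is the paper's digit b_(k+1).\<close>

definition word_val :: "(nat \<Rightarrow> bool) \<Rightarrow> real" where
  "word_val w = (\<Sum>k. (if w k then 1 else 0) / 2 ^ (Suc k))"

definition beta :: "real \<Rightarrow> (nat \<Rightarrow> bool)" where
  "beta x = (THE w. infinite {k. w k} \<and> word_val w = x)"

text \<open>rho: delete the digits 0; a digit 1 at (1-indexed) position n becomes 0 if n is
  odd and 1 if n is even.  For a word with infinitely many 1's, the k-th surviving digit
  comes from the k-th 1 (0-indexed position p = enumerate ..  k, i.e. n = p+1), so it
  equals 1 iff p is odd.\<close>
definition rho :: "(nat \<Rightarrow> bool) \<Rightarrow> (nat \<Rightarrow> bool)" where
  "rho w = (\<lambda>k. odd (enumerate {p. w p} k))"

definition R :: "real \<Rightarrow> real" where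
  "R x = (if x = 0 then 2/3 else word_val (rho (beta x)))"

end

theory Submission
  imports Defs
begin

text \<open>The digits of \<open>R x\<close> are those of \<open>\<rho> (\<beta> x)\<close>, so the orbit of \<open>x\<close> is dense as soon
  as the \<open>\<rho>\<close>-orbit of \<open>\<beta> x\<close> contains, arbitrarily late, words beginning with every finite
  list. Such a word is built backwards. If \<open>a\<close> has even length then \<open>\<rho> (a w)\<close> begins with
  the list \<open>\<rho> a\<close>, and every word \<open>u\<close> has the preimages that place a single 1 in each
  block of four digits, at offset \<open>2 e\<^sub>j + u\<^sub>j\<close> for an arbitrary choice of bits \<open>e\<close>.
  Iterating \<open>\<rho>\<close> on a list makes it die out, because \<open>\<rho> \<circ> \<rho>\<close> at least halves the length,
  so after each list has died the next list of an enumeration can be inserted. The uncountably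
  many preimages of the resulting point have dense orbits as well, and the orbit of the point
  itself lies in the set and approaches every number.\<close>

section \<open>The map \<open>\<rho>\<close> on words and on finite lists\<close>

definition prepend :: "bool list \<Rightarrow> (nat \<Rightarrow> bool) \<Rightarrow> nat \<Rightarrow> bool" where
  "prepend l w k = (if k < length l then l ! k else w (k - length l))"

lemma prepend_Nil [simp]: "prepend [] w = w"
  by (rule ext) (simp add: prepend_def)

lemma prepend_append: "prepend (a @ b) w = prepend a (prepend b w)"
  by (rule ext) (auto simp: prepend_def nth_append)

lemma prepend_Not: "(\<lambda>k. \<not> prepend l w k) = prepend (map Not l) (\<lambda>k. \<not> w k)"
  by (rule ext) (simp add: prepend_def)

lemma infinite_prepend:
  assumes "infinite {k. w k}"
  shows "infinite {k. prepend l w k}"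
proof -
  have "(\<lambda>k. k + length l) ` {k. w k} \<subseteq> {k. prepend l w k}"
    by (auto simp: prepend_def)
  moreover have "infinite ((\<lambda>k. k + length l) ` {k. w k})"
    using assms finite_imageD[of "\<lambda>k. k + length l" "{k. w k}"] by (auto simp: inj_on_def)
  ultimately show ?thesis
    using finite_subset by blast
qed

lemma strict_mono_eq_if_range_eq:
  fixes f g :: "nat \<Rightarrow> nat"
  assumes f: "strict_mono f" and g: "strict_mono g" and range: "range f = range g"
  shows "f = g"
proof
  fix n show "f n = g n"
  proof (induction n rule: less_induct)
    case (less n)
    have "f n \<in> range g" "g n \<in> range f"
      using range by auto
    then obtain m m' where m: "f n = g m" and m': "g n = f m'"
      by auto
    show ?case
    proof (rule linorder_cases)
      assume "f n < g n"
      then have "m < n"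
        using m g by (simp add: strict_mono_less)
      then show ?thesis
        using less m strict_monoD[OF f] by fastforce
    next
      assume "g n < f n"
      then have "m' < n"
        using m' f by (simp add: strict_mono_less)
      then show ?thesis
        using less m' strict_monoD[OF g] by fastforce
    qed
  qed
qed

lemma rho_eq_odd_positions:
  assumes "strict_mono f" and "{p. w p} = range f"
  shows "rho w = (\<lambda>k. odd (f k))"
proof -
  have "infinite (range f)"
    using range_inj_infinite strict_mono_imp_inj_on[OF assms(1)] by blast
  then have "enumerate (range f) = f"
    using strict_mono_eq_if_range_eq[OF strict_mono_enumerate assms(1)] range_enumerate by blast
  then show ?thesis
    unfolding rho_def assms(2) by simp
qed

lemma positions_prepend_single:
  "{p. prepend [b] w p} = (if b then {0} else {}) \<union> Suc ` {k. w k}"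
proof (intro set_eqI)
  fix p show "p \<in> {p. prepend [b] w p} \<longleftrightarrow> p \<in> (if b then {0} else {}) \<union> Suc ` {k. w k}"
    by (cases p) (auto simp: prepend_def)
qed

lemma rho_prepend_single:
  assumes "infinite {k. w k}"
  shows "rho (prepend [b] w) = prepend (if b then [False] else []) (\<lambda>k. \<not> rho w k)"
proof -
  define f where "f = enumerate {k. w k}"
  have f: "strict_mono f" "{k. w k} = range f"
    using strict_mono_enumerate[OF assms] range_enumerate[OF assms] unfolding f_def by auto
  have rho_w: "rho w = (\<lambda>k. odd (f k))"
    by (rule rho_eq_odd_positions[OF f])
  show ?thesis
  proof (cases b)
    case False
    have "rho (prepend [b] w) = (\<lambda>k. odd (Suc (f k)))"
    proof (rule rho_eq_odd_positions)
      show "strict_mono (\<lambda>k. Suc (f k))"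
        using f(1) by (simp add: strict_mono_def)
      show "{p. prepend [b] w p} = range (\<lambda>k. Suc (f k))"
        using False unfolding positions_prepend_single f(2) by (simp add: image_image)
    qed
    then show ?thesis
      using False rho_w by simp
  next
    case True
    let ?g = "\<lambda>k. case k of 0 \<Rightarrow> 0 | Suc j \<Rightarrow> Suc (f j)"
    have "rho (prepend [b] w) = (\<lambda>k. odd (?g k))"
    proof (rule rho_eq_odd_positions)
      show "strict_mono ?g"
        using f(1) by (auto simp: strict_mono_Suc_iff split: nat.splits)
      have "range ?g = insert 0 (Suc ` range f)"
        by (auto simp: image_iff split: nat.splits)
      then show "{p. prepend [b] w p} = range ?g"
        using True unfolding positions_prepend_single f(2) by simp
    qed
    then show ?thesis
      using True rho_w by (simp add: fun_eq_iff prepend_def split: nat.split)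
  qed
qed

text \<open>\<open>rho_list a\<close> is the part of \<open>\<rho> (a w)\<close> produced by the digits of \<open>a\<close>. A leading
  digit shifts all later positions by one and so complements their images.\<close>

fun rho_list :: "bool list \<Rightarrow> bool list" where
  "rho_list [] = []"
| "rho_list (b # a) = (if b then [False] else []) @ map Not (rho_list a)"

lemma rho_prepend:
  assumes "infinite {k. w k}"
  shows "rho (prepend a w) = prepend (rho_list a) (\<lambda>k. odd (length a) \<noteq> rho w k)"
proof (induction a)
  case (Cons b a)
  have "rho (prepend (b # a) w) = rho (prepend [b] (prepend a w))"
    using prepend_append[of "[b]" a w] by simp
  also have "\<dots> = prepend (if b then [False] else []) (\<lambda>k. \<not> rho (prepend a w) k)"
    by (rule rho_prepend_single[OF infinite_prepend[OF assms]])
  also have "\<dots> = prepend (rho_list (b # a)) (\<lambda>k. odd (length (b # a)) \<noteq> rho w k)"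
    unfolding Cons.IH prepend_Not by (simp add: prepend_append)
  finally show ?case .
qed simp

lemma rho_prepend_even:
  assumes "infinite {k. w k}" and "even (length a)"
  shows "rho (prepend a w) = prepend (rho_list a) (rho w)"
  using rho_prepend[OF assms(1), of a] assms(2) by simp

lemma rho_list_append_replicate_False: "rho_list (l @ replicate n False) = rho_list l"
  by (induction l) (induction n, auto)

lemma length_rho_list: "length (rho_list l) = length (filter id l)"
  by (induction l) auto

lemma count_rho_list:
  "length (filter id (rho_list l)) \<le> length l div 2 \<and>
   length (filter Not (rho_list l)) \<le> (length l + 1) div 2"
proof (induction l)
  case (Cons b a)
  have "length (filter id (rho_list a)) + length (filter Not (rho_list a)) = length (rho_list a)"
    using sum_length_filter_compl[of id "rho_list a"] by (simp add: comp_def)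
  then show ?case
    using Cons by (cases b) (auto simp: filter_map comp_def)
qed simp

lemma length_rho_list_rho_list_less:
  assumes "l \<noteq> []"
  shows "length (rho_list (rho_list l)) < length l"
proof -
  have "length (rho_list (rho_list l)) \<le> length l div 2"
    using count_rho_list[of l] by (simp add: length_rho_list)
  also have "\<dots> < length l"
    using assms by simp
  finally show ?thesis .
qed

definition rho_preimage :: "(nat \<Rightarrow> bool) \<Rightarrow> (nat \<Rightarrow> bool) \<Rightarrow> nat \<Rightarrow> bool" where
  "rho_preimage e u p = (p mod 4 = 2 * of_bool (e (p div 4)) + of_bool (u (p div 4)))"

lemma strict_mono_block_position:
  "strict_mono (\<lambda>j. 4 * j + 2 * of_bool (e j) + of_bool (u j) :: nat)"
  by (rule strict_monoI_Suc) auto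

lemma positions_rho_preimage:
  "{p. rho_preimage e u p} = range (\<lambda>j. 4 * j + 2 * of_bool (e j) + of_bool (u j))"
proof (intro set_eqI iffI)
  fix p assume "p \<in> {p. rho_preimage e u p}"
  then have "p mod 4 = 2 * of_bool (e (p div 4)) + of_bool (u (p div 4))"
    by (simp add: rho_preimage_def)
  then have "p = 4 * (p div 4) + 2 * of_bool (e (p div 4)) + of_bool (u (p div 4))"
    using div_mult_mod_eq[of p 4] by linarith
  then show "p \<in> range (\<lambda>j. 4 * j + 2 * of_bool (e j) + of_bool (u j))"
    by (rule range_eqI)
next
  fix p assume "p \<in> range (\<lambda>j. 4 * j + 2 * of_bool (e j) + of_bool (u j))"
  then obtain j where "p = 4 * j + (2 * of_bool (e j) + of_bool (u j))"
    by (auto simp only: add.assoc)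
  moreover have "2 * of_bool (e j) + of_bool (u j) < (4::nat)"
    by simp
  ultimately show "p \<in> {p. rho_preimage e u p}"
    unfolding rho_preimage_def by simp
qed

lemma infinite_rho_preimage: "infinite {p. rho_preimage e u p}"
  unfolding positions_rho_preimage
  by (rule range_inj_infinite[OF strict_mono_imp_inj_on[OF strict_mono_block_position]])

lemma rho_rho_preimage: "rho (rho_preimage e u) = u"
  by (simp add: rho_eq_odd_positions[OF strict_mono_block_position positions_rho_preimage])

lemma inj_rho_preimage: "inj (\<lambda>e. rho_preimage e u)"
proof (rule injI)
  fix e e' assume eq: "rho_preimage e u = rho_preimage e' u"
  have decode: "e j = (rho_preimage e u (4 * j + 2) \<or> rho_preimage e u (4 * j + 3))" for e j
  proof -
    have "(4 * j + 2) div 4 = j" "(4 * j + 2) mod 4 = 2" "(4 * j + 3) div 4 = j" "(4 * j + 3) mod 4 = 3"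
      by presburger+
    then show ?thesis
      unfolding rho_preimage_def by auto
  qed
  show "e = e'"
  proof
    fix j show "e j = e' j"
      using decode[of e j] decode[of e' j] eq by simp
  qed
qed

section \<open>A word whose \<open>\<rho>\<close>-orbit starts with every finite list\<close>

definition zero_pad :: "bool list \<Rightarrow> bool list" where
  "zero_pad l = l @ replicate (2 - length l mod 2) False"

lemma even_length_zero_pad: "even (length (zero_pad l))"
  by (simp add: zero_pad_def)

lemma rho_list_zero_pad: "rho_list (zero_pad l) = rho_list l"
  by (simp add: zero_pad_def rho_list_append_replicate_False)

text \<open>The state is the prefix forced so far and the index of the next list to be scheduled.\<close>

fun schedule_step :: "bool list \<times> nat \<Rightarrow> bool list \<times> nat" where
  "schedule_step (l, c) =
     (if rho_list l = [] then (zero_pad (from_nat c), Suc c) else (zero_pad (rho_list l), c))"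

definition schedule :: "nat \<Rightarrow> bool list \<times> nat" where
  "schedule i = (schedule_step ^^ i) ([], 0)"

definition sched_prefix :: "nat \<Rightarrow> bool list" where
  "sched_prefix i = fst (schedule i)"

definition sched_fresh :: "nat \<Rightarrow> bool list" where
  "sched_fresh i = drop (length (rho_list (sched_prefix i))) (sched_prefix (Suc i))"

lemma schedule_Suc: "schedule (Suc i) = schedule_step (schedule i)"
  by (simp add: schedule_def)

lemma sched_prefix_Suc_zero_pad:
  "sched_prefix (Suc i) = zero_pad
     (if rho_list (sched_prefix i) = [] then from_nat (snd (schedule i)) else rho_list (sched_prefix i))"
  by (cases "schedule i") (simp add: sched_prefix_def schedule_Suc)

lemma sched_prefix_Suc: "sched_prefix (Suc i) = rho_list (sched_prefix i) @ sched_fresh i"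
proof -
  have "take (length (rho_list (sched_prefix i))) (sched_prefix (Suc i)) = rho_list (sched_prefix i)"
    unfolding sched_prefix_Suc_zero_pad by (simp add: zero_pad_def)
  then show ?thesis
    unfolding sched_fresh_def by (metis append_take_drop_id)
qed

lemma sched_fresh_nonempty: "sched_fresh i \<noteq> []"
proof -
  have "length (rho_list (sched_prefix i)) < length (sched_prefix (Suc i))"
    unfolding sched_prefix_Suc_zero_pad by (auto simp: zero_pad_def)
  then show ?thesis
    by (simp add: sched_fresh_def)
qed

lemma even_length_sched_prefix: "even (length (sched_prefix i))"
  by (cases i) (simp_all add: sched_prefix_Suc_zero_pad even_length_zero_pad,
      simp add: sched_prefix_def schedule_def)

text \<open>\<open>sched_tail i\<close> is \<open>rho_preimage (\<lambda>_. False) (prepend (sched_fresh i) (sched_tail (Suc i)))\<close>,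
  unfolded so that the recursion terminates; the guard \<open>sched_fresh i = []\<close> never fires.\<close>

function sched_tail :: "nat \<Rightarrow> nat \<Rightarrow> bool" where
  "sched_tail i p = (p mod 4 = of_bool
     (if p div 4 < length (sched_fresh i) then sched_fresh i ! (p div 4)
      else if sched_fresh i = [] then False
      else sched_tail (Suc i) (p div 4 - length (sched_fresh i))))"
  by pat_completeness auto
termination
proof (relation "Wellfounded.measure snd")
  fix i p :: nat
  assume "\<not> p div 4 < length (sched_fresh i)" and "sched_fresh i \<noteq> []"
  moreover have "p div 4 \<le> p"
    by simp
  ultimately have "p div 4 - length (sched_fresh i) < p"
    by (metis length_greater_0_conv diff_less le_less_trans linorder_not_less order.strict_trans2)
  then show "((Suc i, p div 4 - length (sched_fresh i)), i, p) \<in> Wellfounded.measure snd"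
    by simp
qed simp

declare sched_tail.simps [simp del]

lemma sched_tail_eq:
  "sched_tail i = rho_preimage (\<lambda>_. False) (prepend (sched_fresh i) (sched_tail (Suc i)))"
  using sched_fresh_nonempty[of i]
  by (intro ext) (simp add: sched_tail.simps[of i] rho_preimage_def prepend_def)

lemma infinite_sched_tail: "infinite {p. sched_tail i p}"
  by (subst sched_tail_eq) (rule infinite_rho_preimage)

definition sched_word :: "nat \<Rightarrow> nat \<Rightarrow> bool" where
  "sched_word i = prepend (sched_prefix i) (sched_tail i)"

lemma infinite_sched_word: "infinite {k. sched_word i k}"
  unfolding sched_word_def by (rule infinite_prepend[OF infinite_sched_tail])

lemma rho_sched_word: "rho (sched_word i) = sched_word (Suc i)"
proof -
  have "rho (sched_word i) = prepend (rho_list (sched_prefix i)) (rho (sched_tail i))"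
    unfolding sched_word_def
    by (rule rho_prepend_even[OF infinite_sched_tail even_length_sched_prefix])
  also have "rho (sched_tail i) = prepend (sched_fresh i) (sched_tail (Suc i))"
    by (subst sched_tail_eq) (rule rho_rho_preimage)
  finally show ?thesis
    by (simp add: sched_word_def sched_prefix_Suc prepend_append)
qed

lemma rho_list_dies_out:
  "\<exists>k. rho_list (fst ((schedule_step ^^ k) (l, c))) = [] \<and> snd ((schedule_step ^^ k) (l, c)) = c"
proof (induction "length (rho_list l)" arbitrary: l rule: less_induct)
  case less
  show ?case
  proof (cases "rho_list l = []")
    case True
    then show ?thesis
      by (intro exI[of _ 0]) simp
  next
    case False
    define l' where "l' = zero_pad (rho_list l)"
    have one: "(schedule_step ^^ 1) (l, c) = (l', c)"
      using False by (simp add: l'_def)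
    show ?thesis
    proof (cases "rho_list l' = []")
      case True
      then show ?thesis
        using one by (intro exI[of _ 1]) simp
    next
      case False': False
      have two: "(schedule_step ^^ 2) (l, c) = (zero_pad (rho_list l'), c)"
        using one False' by (simp add: numeral_2_eq_2)
      have "length (rho_list (zero_pad (rho_list l'))) < length (rho_list l)"
        using length_rho_list_rho_list_less[OF False] by (simp add: l'_def rho_list_zero_pad)
      then obtain k where "rho_list (fst ((schedule_step ^^ k) (zero_pad (rho_list l'), c))) = []"
          and "snd ((schedule_step ^^ k) (zero_pad (rho_list l'), c)) = c"
        using less by blast
      moreover have "(schedule_step ^^ (k + 2)) (l, c) = (schedule_step ^^ k) (zero_pad (rho_list l'), c)"
        by (simp only: funpow_add o_apply two)
      ultimately show ?thesis
        by (intro exI[of _ "k + 2"]) simp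
    qed
  qed
qed

lemma snd_schedule_le: "snd (schedule i) \<le> i"
proof (induction i)
  case (Suc i)
  have "snd (schedule (Suc i)) \<le> Suc (snd (schedule i))"
    by (cases "schedule i") (simp add: schedule_Suc)
  with Suc show ?case
    by simp
qed (simp add: schedule_def)

lemma schedule_reaches:
  "\<exists>i. snd (schedule i) = c \<and> rho_list (sched_prefix i) = []"
proof (induction c)
  case 0
  show ?case
    using rho_list_dies_out[of "[]" 0] by (auto simp: schedule_def sched_prefix_def)
next
  case (Suc c)
  then obtain i where i: "snd (schedule i) = c" "rho_list (sched_prefix i) = []"
    by blast
  then have "schedule (Suc i) = (zero_pad (from_nat c), Suc c)"
    by (cases "schedule i") (simp add: schedule_Suc sched_prefix_def)
  moreover obtain k
    where "rho_list (fst ((schedule_step ^^ k) (zero_pad (from_nat c), Suc c))) = []"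
      and "snd ((schedule_step ^^ k) (zero_pad (from_nat c), Suc c)) = Suc c"
    using rho_list_dies_out by blast
  moreover have "schedule (Suc i + k) = (schedule_step ^^ k) (schedule (Suc i))"
    by (simp only: schedule_def add.commute[of "Suc i" k] funpow_add o_apply)
  ultimately show ?case
    by (intro exI[of _ "Suc i + k"]) (simp add: sched_prefix_def)
qed

lemma sched_prefix_from_nat: "\<exists>i\<ge>c. sched_prefix (Suc i) = zero_pad (from_nat c)"
proof -
  obtain i where i: "snd (schedule i) = c" "rho_list (sched_prefix i) = []"
    using schedule_reaches by blast
  then have "sched_prefix (Suc i) = zero_pad (from_nat c)"
    by (simp add: sched_prefix_Suc_zero_pad)
  moreover have "c \<le> i"
    using snd_schedule_le[of i] i by simp
  ultimately show ?thesis
    by blast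
qed

text \<open>Every list occurs as a prefix arbitrarily late, since the lists \<open>p @ replicate k False\<close>
  have infinitely many indices in the enumeration.\<close>

lemma sched_word_prefix: "\<exists>m\<ge>n. \<exists>w. sched_word m = prepend p w"
proof -
  have "inj (\<lambda>k. to_nat (p @ replicate k False))"
    by (rule injI) simp
  then have "infinite (range (\<lambda>k. to_nat (p @ replicate k False)))"
    by (rule range_inj_infinite)
  then obtain k where k: "n \<le> to_nat (p @ replicate k False)"
    unfolding infinite_nat_iff_unbounded_le by blast
  obtain i where i: "i \<ge> to_nat (p @ replicate k False)"
      "sched_prefix (Suc i) = zero_pad (p @ replicate k False)"
    using sched_prefix_from_nat by (metis from_nat_to_nat)
  then have "sched_word (Suc i) = prepend p (prepend (drop (length p) (sched_prefix (Suc i)))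
      (sched_tail (Suc i)))"
    by (simp add: sched_word_def zero_pad_def prepend_append[symmetric])
  moreover have "n \<le> Suc i"
    using i k by simp
  ultimately show ?thesis
    by blast
qed

section \<open>Values of binary words\<close>

lemma summable_word_digits: "summable (\<lambda>k. (if w k then 1 else 0) / 2 ^ Suc k :: real)"
  by (rule summable_comparison_test'[OF sums_summable[OF power_half_series], of 0])
    (simp add: power_one_over)

lemma word_val_nonneg: "0 \<le> word_val w"
  unfolding word_val_def by (rule suminf_nonneg[OF summable_word_digits]) simp

lemma word_val_le_one: "word_val w \<le> 1"
proof -
  have "word_val w \<le> (\<Sum>k. (1/2::real) ^ Suc k)"
    unfolding word_val_def
    by (rule suminf_le[OF _ summable_word_digits sums_summable[OF power_half_series]])
      (simp add: power_one_over)
  then show ?thesis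
    using sums_unique[OF power_half_series] by simp
qed

lemma word_val_pos:
  assumes "infinite {k. w k}"
  shows "0 < word_val w"
proof -
  obtain i where "w i"
    using not_finite_existsD[OF assms] by blast
  then show ?thesis
    unfolding word_val_def by (intro suminf_pos2[OF summable_word_digits, of _ i]) simp_all
qed

definition list_val :: "bool list \<Rightarrow> real" where
  "list_val l = (\<Sum>j<length l. (if l ! j then 1 else 0) / 2 ^ Suc j)"

lemma list_val_snoc: "list_val (l @ [b]) = list_val l + (if b then 1 else 0) / 2 ^ Suc (length l)"
  by (simp add: list_val_def nth_append)

lemma word_val_prepend: "word_val (prepend l w) = list_val l + word_val w / 2 ^ length l"
proof -
  let ?d = "\<lambda>k. (if prepend l w k then 1 else 0) / 2 ^ Suc k :: real"
  have "word_val (prepend l w) = (\<Sum>k. ?d (k + length l)) + (\<Sum>k<length l. ?d k)"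
    unfolding word_val_def by (rule suminf_split_initial_segment[OF summable_word_digits])
  also have "(\<lambda>k. ?d (k + length l)) = (\<lambda>k. (if w k then 1 else 0) / 2 ^ Suc k / 2 ^ length l)"
    by (simp add: prepend_def power_add mult.assoc)
  also have "(\<Sum>k<length l. ?d k) = list_val l"
    unfolding list_val_def by (rule sum.cong) (simp_all add: prepend_def)
  finally show ?thesis
    unfolding word_val_def suminf_divide[OF summable_word_digits] by simp
qed

lemma word_val_Suc:
  "word_val w = (if w 0 then 1/2 else 0) + word_val (\<lambda>k. w (Suc k)) / 2"
proof -
  have "prepend [w 0] (\<lambda>k. w (Suc k)) = w"
    by (rule ext) (simp add: prepend_def)
  then show ?thesis
    using word_val_prepend[of "[w 0]" "\<lambda>k. w (Suc k)"] by (simp add: list_val_def)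
qed

lemma infinite_Suc_shift:
  assumes "infinite {k. w k}"
  shows "infinite {k. w (Suc k)}"
proof -
  have "{k. w k} \<subseteq> insert 0 (Suc ` {k. w (Suc k)})"
    using not0_implies_Suc by fastforce
  then show ?thesis
    using assms finite_subset by blast
qed

lemma word_val_less_if_first_digit:
  assumes "u 0" and "\<not> v 0" and "infinite {k. u k}"
  shows "word_val v < word_val u"
  using assms word_val_Suc[of u] word_val_Suc[of v] word_val_le_one[of "\<lambda>k. v (Suc k)"]
    word_val_pos[OF infinite_Suc_shift[OF assms(3)]] by simp

lemma word_val_inj:
  assumes "infinite {k. u k}" and "infinite {k. v k}" and "word_val u = word_val v"
  shows "u = v"
proof
  fix k show "u k = v k"
    using assms
  proof (induction k arbitrary: u v)
    case 0
    then show ?case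
      using word_val_less_if_first_digit[of u v] word_val_less_if_first_digit[of v u] by force
  next
    case (Suc k)
    have "u 0 = v 0"
      using Suc.prems word_val_less_if_first_digit[of u v] word_val_less_if_first_digit[of v u]
      by force
    then have "word_val (\<lambda>k. u (Suc k)) = word_val (\<lambda>k. v (Suc k))"
      using Suc.prems(3) word_val_Suc[of u] word_val_Suc[of v] by simp
    then show ?case
      using Suc.IH[of "\<lambda>k. u (Suc k)" "\<lambda>k. v (Suc k)"] Suc.prems(1,2) infinite_Suc_shift by blast
  qed
qed

lemma beta_word_val:
  assumes "infinite {k. w k}"
  shows "beta (word_val w) = w"
  unfolding beta_def
proof (rule the_equality)
  show "infinite {k. w k} \<and> word_val w = word_val w"
    using assms by simp
  show "w' = w" if "infinite {k. w' k} \<and> word_val w' = word_val w" for w'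
    using that assms word_val_inj by blast
qed

lemma R_word_val:
  assumes "infinite {k. w k}"
  shows "R (word_val w) = word_val (rho w)"
  using word_val_pos[OF assms] by (simp add: R_def beta_word_val[OF assms])

lemma exists_prefix_close:
  assumes "0 \<le> y" and "y \<le> 1"
  shows "\<exists>p. \<forall>w. dist (word_val (prepend p w)) y \<le> 1 / 2 ^ L"
proof -
  have "\<exists>p. length p = L \<and> list_val p \<le> y \<and> y \<le> list_val p + 1 / 2 ^ L"
  proof (induction L)
    case 0
    show ?case
      using assms by (intro exI[of _ "[]"]) (simp add: list_val_def)
  next
    case (Suc L)
    then obtain p where p: "length p = L" "list_val p \<le> y" "y \<le> list_val p + 1 / 2 ^ L"
      by blast
    show ?case
    proof (cases "y \<le> list_val p + 1 / 2 ^ Suc L")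
      case True
      then show ?thesis
        using p by (intro exI[of _ "p @ [False]"]) (simp add: list_val_snoc)
    next
      case False
      then show ?thesis
        using p by (intro exI[of _ "p @ [True]"]) (auto simp: list_val_snoc)
    qed
  qed
  then obtain p where p: "length p = L" "list_val p \<le> y" "y \<le> list_val p + 1 / 2 ^ L"
    by blast
  have "dist (word_val (prepend p w)) y \<le> 1 / 2 ^ L" for w
  proof -
    have "0 \<le> word_val w / 2 ^ L" "word_val w / 2 ^ L \<le> 1 / 2 ^ L"
      using word_val_nonneg[of w] word_val_le_one[of w] by (auto intro: divide_right_mono)
    then show ?thesis
      using p word_val_prepend[of p w] by (auto simp: dist_real_def abs_le_iff)
  qed
  then show ?thesis
    by blast
qed

section \<open>Dense orbits\<close>

lemma R_word_val_rho_preimage: "R (word_val (rho_preimage e u)) = word_val u"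
  by (simp add: R_word_val[OF infinite_rho_preimage] rho_rho_preimage)

lemma inj_word_val_rho_preimage: "inj (\<lambda>e. word_val (rho_preimage e u))"
proof (rule injI)
  fix e e' assume "word_val (rho_preimage e u) = word_val (rho_preimage e' u)"
  then have "rho_preimage e u = rho_preimage e' u"
    using word_val_inj infinite_rho_preimage by blast
  then show "e = e'"
    using inj_rho_preimage by (auto dest: injD)
qed

lemma uncountable_UNIV_nat_bool: "uncountable (UNIV :: (nat \<Rightarrow> bool) set)"
proof
  assume "countable (UNIV :: (nat \<Rightarrow> bool) set)"
  then have "range (from_nat_into (UNIV :: (nat \<Rightarrow> bool) set)) = UNIV"
    by simp
  then obtain m where "from_nat_into UNIV m = (\<lambda>n. \<not> from_nat_into UNIV n n)"
    by (metis UNIV_I imageE)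
  then show False
    by (metis (full_types))
qed

lemma orbit_of_image_subset: "{(f ^^ n) (f x) | n. True} \<subseteq> {(f ^^ n) x | n. True}"
proof
  fix z assume "z \<in> {(f ^^ n) (f x) | n. True}"
  then obtain n where "z = (f ^^ n) (f x)"
    by blast
  then have "z = (f ^^ Suc n) x"
    by (simp only: funpow_Suc_right o_apply)
  then show "z \<in> {(f ^^ n) x | n. True}"
    by blast
qed

definition sched_point :: "nat \<Rightarrow> real" where
  "sched_point n = word_val (sched_word n)"

lemma funpow_R_sched_point: "(R ^^ k) (sched_point n) = sched_point (n + k)"
  by (induction k) (simp_all add: sched_point_def R_word_val[OF infinite_sched_word] rho_sched_word)

lemma sched_point_approaches:
  assumes "y \<in> {0..1}" and "0 < e"
  shows "\<exists>m\<ge>n. dist (sched_point m) y \<le> e"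
proof -
  obtain L where L: "(1/2::real) ^ L < e"
    using real_arch_pow_inv[OF assms(2), of "1/2"] by auto
  obtain p where p: "\<forall>w. dist (word_val (prepend p w)) y \<le> 1 / 2 ^ L"
    using exists_prefix_close[of y L] assms(1) by auto
  obtain m w where "m \<ge> n" and "sched_word m = prepend p w"
    using sched_word_prefix by blast
  moreover have "(1 / 2 ^ L :: real) \<le> e"
    using L by (simp add: power_one_over)
  ultimately show ?thesis
    using p unfolding sched_point_def by (metis order.trans)
qed

lemma dense_orbit_sched_point: "{0..1} \<subseteq> closure {(R ^^ k) (sched_point n) | k. True}"
proof
  fix y :: real assume y: "y \<in> {0..1}"
  show "y \<in> closure {(R ^^ k) (sched_point n) | k. True}"
    unfolding closure_approachable_le
  proof (intro allI impI)
    fix e :: real assume "0 < e"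
    then obtain m where "m \<ge> n" and "dist (sched_point m) y \<le> e"
      using sched_point_approaches y by blast
    moreover have "sched_point m = (R ^^ (m - n)) (sched_point n)"
      using \<open>m \<ge> n\<close> by (simp add: funpow_R_sched_point)
    ultimately show "\<exists>z\<in>{(R ^^ k) (sched_point n) | k. True}. dist z y \<le> e"
      by auto
  qed
qed

lemma dense_orbit_rho_preimage_sched_word:
  "{0..1} \<subseteq> closure {(R ^^ n) (word_val (rho_preimage e (sched_word 0))) | n. True}"
proof -
  have "{(R ^^ n) (sched_point 0) | n. True}
      \<subseteq> {(R ^^ n) (word_val (rho_preimage e (sched_word 0))) | n. True}"
    using orbit_of_image_subset[of R "word_val (rho_preimage e (sched_word 0))"]
    by (simp only: R_word_val_rho_preimage sched_point_def)
  then show ?thesis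
    using dense_orbit_sched_point[of 0] closure_mono by blast
qed

theorem proposition6p7:
  defines "S \<equiv> {x \<in> {0..1::real}. {0..1} \<subseteq> closure {(R ^^ n) x | n. True}}"
  shows "uncountable S \<and> {0..1} \<subseteq> closure S"
proof
  have word_val_in_S: "word_val w \<in> S" if "{0..1} \<subseteq> closure {(R ^^ n) (word_val w) | n. True}" for w
    unfolding S_def using that word_val_nonneg word_val_le_one by auto
  have sched_point_in_S: "sched_point n \<in> S" for n
    unfolding sched_point_def by (rule word_val_in_S) (rule dense_orbit_sched_point[unfolded sched_point_def])
  have "word_val (rho_preimage e (sched_word 0)) \<in> S" for e
    by (rule word_val_in_S) (rule dense_orbit_rho_preimage_sched_word)
  then have "range (\<lambda>e. word_val (rho_preimage e (sched_word 0))) \<subseteq> S"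
    by blast
  then show "uncountable S"
    using inj_word_val_rho_preimage uncountable_UNIV_nat_bool
    by (metis countable_image_inj_on countable_subset)
  show "{0..1} \<subseteq> closure S"
  proof
    fix y :: real assume "y \<in> {0..1}"
    then show "y \<in> closure S"
      unfolding closure_approachable_le using sched_point_approaches sched_point_in_S by blast
  qed
qed

end
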